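(* Under all the hypotheses of the scalar refinement lemma (a presented PROP $\mathcal{P}^{\mathrm{src}}/\mathcal{R}^{\mathrm{src}}$ with a faithful strict symmetric monoidal interpretation into an endomorphism-only symmetric monoidal subcategory $\mathcal{C}^{\mathrm{src}}\subseteq\mathbf{FdHilb}$ whose scalar group $\mathcal{C}^{\mathrm{src}}(0,0)$ is cyclic of order $m$ generated by the interpretation of a source scalar $s$, which has no hidden phases and all of whose morphisms are invertible in $\mathcal{C}^{\mathrm{src}}$; with $\ell\ge1$, $\zeta$ of order $m\ell$ and $r$ with $\zeta^r=[\![s]\!]_{\mathrm{src}}$), let $C_1,C_2$ be morphisms built only from source generators (no occurrence of $\omega$). If $C_1=C_2$ is derivable in the scalar-refined presentation $\mathcal{P}^{\mathrm{src},\sharp}/\mathcal{R}^{\mathrm{src},\sharp}$, then $C_1=C_2$ is already derivable in $\mathcal{P}^{\mathrm{src}}/\mathcal{R}^{\mathrm{src}}$.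
   Context: A PROP is a strict symmetric monoidal category with objects the natural numbers, $n\otimes m=n+m$, unit $0$; a presented PROP $\mathcal{P}/\mathcal{R}$ is the free PROP on a signature of generators modulo the congruence generated by equations $\mathcal{R}$. $\mathbf{FdHilb}$ is the strict symmetric monoidal category of finite-dimensional Hilbert spaces with $n$ interpreted as $(\mathbb{C}^d)^{\otimes n}$. No hidden phases means: whenever $\lambda\in\mathrm{U}(1)$ and $\lambda\,\mathrm{id}_n\in\mathcal{C}^{\mathrm{src}}(n,n)$, then $\lambda\in\mathcal{C}^{\mathrm{src}}(0,0)$. Faithful means injective on hom-sets. The scalar-refined presentation $\mathcal{P}^{\mathrm{src},\sharp}/\mathcal{R}^{\mathrm{src},\sharp}$ adjoins to $\mathcal{P}^{\mathrm{src}}/\mathcal{R}^{\mathrm{src}}$ a new generator $\omega:0\to0$ and the relations $\omega^{m\ell}=\mathrm{id}_0$ and $\omega^r=s$ ($\omega^k$ the $k$-fold composite of $\omega$). *)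

theory Defs
  imports Complex_Main "Jordan_Normal_Form.Matrix"
begin

text \<open>Gen g: a generator; Idd n: identity on n; Sw: the elementary symmetry 1+1 -> 1+1;
  Cmp a b: sequential composition, first a then b (diagrammatic order);
  Tns a b: monoidal product a (x) b.\<close>

datatype 'g diag = Gen 'g | Idd nat | Sw | Cmp "'g diag" "'g diag" | Tns "'g diag" "'g diag"

inductive typed :: "('g \<Rightarrow> nat \<times> nat) \<Rightarrow> 'g diag \<Rightarrow> nat \<Rightarrow> nat \<Rightarrow> bool"
  for ar :: "'g \<Rightarrow> nat \<times> nat" where
  t_gen: "ar g = (n, m) \<Longrightarrow> typed ar (Gen g) n m"
| t_id: "typed ar (Idd n) n n"
| t_sw: "typed ar Sw 2 2"
| t_cmp: "typed ar a n k \<Longrightarrow> typed ar b k m \<Longrightarrow> typed ar (Cmp a b) n m"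
| t_tns: "typed ar a n m \<Longrightarrow> typed ar b n' m' \<Longrightarrow> typed ar (Tns a b) (n + n') (m + m')"

fun swp1 :: "nat \<Rightarrow> 'g diag" where
  "swp1 0 = Idd 1"
| "swp1 (Suc m) = Cmp (Tns Sw (Idd m)) (Tns (Idd 1) (swp1 m))"

fun swp :: "nat \<Rightarrow> nat \<Rightarrow> 'g diag" where
  "swp 0 m = Idd m"
| "swp (Suc n) m = Cmp (Tns (Idd 1) (swp n m)) (Tns (swp1 m) (Idd n))"

text \<open>Derivable equality in the presented PROP P/R: the least congruence (w.r.t. composition and
  monoidal product) on well-typed terms containing the equations R and the axioms of strict
  symmetric monoidal categories with objects the natural numbers.
  eqv ar R a b n m means that a = b : n -> m is derivable.\<close>

inductive eqv :: "('g \<Rightarrow> nat \<times> nat) \<Rightarrow> ('g diag \<times> 'g diag) set \<Rightarrow>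
                  'g diag \<Rightarrow> 'g diag \<Rightarrow> nat \<Rightarrow> nat \<Rightarrow> bool"
  for ar :: "'g \<Rightarrow> nat \<times> nat" and R :: "('g diag \<times> 'g diag) set" where
  e_refl: "typed ar a n m \<Longrightarrow> eqv ar R a a n m"
| e_sym: "eqv ar R a b n m \<Longrightarrow> eqv ar R b a n m"
| e_trans: "eqv ar R a b n m \<Longrightarrow> eqv ar R b c n m \<Longrightarrow> eqv ar R a c n m"
| e_cmp: "eqv ar R a a' n k \<Longrightarrow> eqv ar R b b' k m \<Longrightarrow> eqv ar R (Cmp a b) (Cmp a' b') n m"
| e_tns: "eqv ar R a a' n m \<Longrightarrow> eqv ar R b b' n' m' \<Longrightarrow>
            eqv ar R (Tns a b) (Tns a' b') (n + n') (m + m')"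
| e_rel: "(a, b) \<in> R \<Longrightarrow> typed ar a n m \<Longrightarrow> typed ar b n m \<Longrightarrow> eqv ar R a b n m"
| e_cmp_assoc: "typed ar a n k \<Longrightarrow> typed ar b k l \<Longrightarrow> typed ar c l m \<Longrightarrow>
            eqv ar R (Cmp (Cmp a b) c) (Cmp a (Cmp b c)) n m"
| e_id_left: "typed ar a n m \<Longrightarrow> eqv ar R (Cmp (Idd n) a) a n m"
| e_id_right: "typed ar a n m \<Longrightarrow> eqv ar R (Cmp a (Idd m)) a n m"
| e_tns_assoc: "typed ar a n m \<Longrightarrow> typed ar b n' m' \<Longrightarrow> typed ar c n'' m'' \<Longrightarrow>
            eqv ar R (Tns (Tns a b) c) (Tns a (Tns b c)) (n + n' + n'') (m + m' + m'')"
| e_unit_left: "typed ar a n m \<Longrightarrow> eqv ar R (Tns (Idd 0) a) a n m"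
| e_unit_right: "typed ar a n m \<Longrightarrow> eqv ar R (Tns a (Idd 0)) a n m"
| e_tns_id: "eqv ar R (Tns (Idd n) (Idd m)) (Idd (n + m)) (n + m) (n + m)"
| e_interchange: "typed ar a n k \<Longrightarrow> typed ar b k m \<Longrightarrow> typed ar c n' k' \<Longrightarrow> typed ar d k' m' \<Longrightarrow>
            eqv ar R (Tns (Cmp a b) (Cmp c d)) (Cmp (Tns a c) (Tns b d)) (n + n') (m + m')"
| e_swp_inv: "eqv ar R (Cmp (swp n m) (swp m n)) (Idd (n + m)) (n + m) (n + m)"
| e_swp_nat: "typed ar a n n' \<Longrightarrow> typed ar b m m' \<Longrightarrow>
            eqv ar R (Cmp (Tns a b) (swp n' m')) (Cmp (swp n m) (Tns b a)) (n + m) (m' + n')"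

section \<open>Interpretation in FdHilb: n is interpreted as (C^d)^(tensor n), i.e. C^(d^n)\<close>

definition kron :: "complex mat \<Rightarrow> complex mat \<Rightarrow> complex mat" where
  "kron A B = mat (dim_row A * dim_row B) (dim_col A * dim_col B)
      (\<lambda>(i, j). A $$ (i div dim_row B, j div dim_col B) * B $$ (i mod dim_row B, j mod dim_col B))"

text \<open>The symmetry on C^d (x) C^d: e_a (x) e_b |-> e_b (x) e_a.\<close>

definition swap_mat :: "nat \<Rightarrow> complex mat" where
  "swap_mat d = mat (d * d) (d * d) (\<lambda>(i, j). if i = (j mod d) * d + j div d then 1 else 0)"

text \<open>The unique strict symmetric monoidal functor from the free PROP to FdHilb
  (with 1 |-> C^d) determined by the images G of the generators.\<close>

fun sem :: "nat \<Rightarrow> ('g \<Rightarrow> complex mat) \<Rightarrow> 'g diag \<Rightarrow> complex mat" where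
  "sem d G (Gen g) = G g"
| "sem d G (Idd n) = 1\<^sub>m (d ^ n)"
| "sem d G Sw = swap_mat d"
| "sem d G (Cmp a b) = sem d G b * sem d G a"
| "sem d G (Tns a b) = kron (sem d G a) (sem d G b)"

definition homs :: "nat \<Rightarrow> ('g \<Rightarrow> nat \<times> nat) \<Rightarrow> ('g \<Rightarrow> complex mat) \<Rightarrow> nat \<Rightarrow> nat \<Rightarrow> complex mat set" where
  "homs d ar G n m = {sem d G C | C. typed ar C n m}"

fun spow :: "'g diag \<Rightarrow> nat \<Rightarrow> 'g diag" where
  "spow w 0 = Idd 0"
| "spow w (Suc k) = Cmp w (spow w k)"

text \<open>Refined signature: generators 'g option, with None the new generator omega : 0 -> 0
  and Some g the source generators.\<close>

definition ar_sharp :: "('g \<Rightarrow> nat \<times> nat) \<Rightarrow> 'g option \<Rightarrow> nat \<times> nat" where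
  "ar_sharp ar x = (case x of None \<Rightarrow> (0, 0) | Some g \<Rightarrow> ar g)"

definition R_sharp :: "('g diag \<times> 'g diag) set \<Rightarrow> 'g diag \<Rightarrow> nat \<Rightarrow> nat \<Rightarrow> nat \<Rightarrow>
                        ('g option diag \<times> 'g option diag) set" where
  "R_sharp R s m l r =
     (\<lambda>(a, b). (map_diag Some a, map_diag Some b)) ` R
     \<union> {(spow (Gen None) (m * l), Idd 0), (spow (Gen None) r, map_diag Some s)}"

end

theory Submission
  imports Defs
begin

text \<open>Interpreting the new scalar \<open>\<omega>\<close> as \<open>\<zeta>\<close> extends the source interpretation to a sound
  interpretation of the scalar-refined presentation, because \<open>\<zeta>\<^bsup>m\<ell>\<^esup> = 1\<close> and
  \<open>\<zeta>\<^sup>r = \<lbrakk>s\<rbrakk>\<close>. An equation between \<open>\<omega>\<close>-free diagrams derivable in the refined presentation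
  therefore holds in \<open>FdHilb\<close>, where the extended interpretation agrees with the source one, and
  faithfulness pulls it back to a derivation in the source presentation. The substance is the
  soundness of the matrix semantics for the axioms of strict symmetric monoidal categories; the
  symmetries are the permutation matrices exchanging the two tensor factors, and the coherence
  they need reduces to the hexagon identities and naturality of these block swaps.\<close>

lemma less_mult_cases:
  fixes j :: nat
  assumes "j < N * M"
  obtains a b where "a < N" "b < M" "j = a * M + b"
proof
  show "j div M < N" using assms by (simp add: less_mult_imp_div_less)
  show "j mod M < M" using assms by (cases M) auto
qed simp

lemma mixed_radix_less:
  fixes a b :: nat
  assumes "a < N" "b < M"
  shows "a * M + b < N * M"
proof -
  have "a * M + b < Suc a * M" using assms(2) by simp
  also have "\<dots> \<le> N * M" using assms(1) by (intro mult_le_mono1) simp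
  finally show ?thesis .
qed

lemma mixed_radix_eq_iff:
  fixes a b a' b' :: nat
  assumes "b < M" "b' < M"
  shows "a * M + b = a' * M + b' \<longleftrightarrow> a = a' \<and> b = b'"
proof
  assume "a * M + b = a' * M + b'"
  then have "(a * M + b) div M = (a' * M + b') div M" "(a * M + b) mod M = (a' * M + b') mod M"
    by simp_all
  then show "a = a' \<and> b = b'"
    using assms by simp
qed simp

lemma mixed_radix_map_less:
  fixes j :: nat
  assumes "\<And>a. a < N \<Longrightarrow> f a < N" "\<And>b. b < M \<Longrightarrow> g b < M" "j < N * M"
  shows "f (j div M) * M + g (j mod M) < N * M"
  using assms(3) by (elim less_mult_cases) (simp add: assms(1,2) mixed_radix_less)

lemma sum_lessThan_mult:
  fixes f :: "nat \<Rightarrow> 'a::comm_monoid_add"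
  shows "(\<Sum>j<N * M. f j) = (\<Sum>a<N. \<Sum>b<M. f (a * M + b))"
proof -
  have "(\<Sum>j<N * M. f j) = (\<Sum>a<N. sum f {a * M..<a * M + M})"
    by (simp add: sum.nat_group)
  also have "\<dots> = (\<Sum>a<N. \<Sum>b<M. f (a * M + b))"
    by (simp add: sum.atLeastLessThan_shift_0 atLeast0LessThan add.commute)
  finally show ?thesis .
qed

lemma index_mult_mat_sum:
  "dim_col A = dim_row B \<Longrightarrow> i < dim_row A \<Longrightarrow> j < dim_col B \<Longrightarrow>
   (A * B) $$ (i, j) = (\<Sum>k<dim_row B. A $$ (i, k) * B $$ (k, j))"
  by (simp add: scalar_prod_def atLeast0LessThan)

lemma dim_kron [simp]:
  "dim_row (kron A B) = dim_row A * dim_row B"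
  "dim_col (kron A B) = dim_col A * dim_col B"
  by (simp_all add: kron_def)

lemma index_kron [simp]:
  "i < dim_row A * dim_row B \<Longrightarrow> j < dim_col A * dim_col B \<Longrightarrow>
   kron A B $$ (i, j) = A $$ (i div dim_row B, j div dim_col B) * B $$ (i mod dim_row B, j mod dim_col B)"
  by (simp add: kron_def)

lemma kron_carrier_mat [simp]:
  "A \<in> carrier_mat m n \<Longrightarrow> B \<in> carrier_mat m' n' \<Longrightarrow> kron A B \<in> carrier_mat (m * m') (n * n')"
  by (intro carrier_matI) auto

lemma index_kron_digits:
  assumes "B \<in> carrier_mat m n" "a < dim_row A" "b < m" "c < dim_col A" "e < n"
  shows "kron A B $$ (a * m + b, c * n + e) = A $$ (a, c) * B $$ (b, e)"
  using assms by (simp add: mixed_radix_less)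

lemma kron_assoc: "kron (kron A B) C = kron A (kron B C)"
proof (rule eq_matI)
  fix i j
  assume "i < dim_row (kron A (kron B C))" "j < dim_col (kron A (kron B C))"
  then have "i < dim_row A * dim_row B * dim_row C" "j < dim_col A * dim_col B * dim_col C"
    by (simp_all add: mult.assoc)
  then obtain a b c a' b' c'
    where digits: "a < dim_row A" "b < dim_row B" "c < dim_row C"
      "a' < dim_col A" "b' < dim_col B" "c' < dim_col C"
      and i: "i = (a * dim_row B + b) * dim_row C + c"
      and j: "j = (a' * dim_col B + b') * dim_col C + c'"
    by (metis less_mult_cases)
  have "kron (kron A B) C $$ (i, j) = kron A B $$ (a * dim_row B + b, a' * dim_col B + b') * C $$ (c, c')"
    unfolding i j by (rule index_kron_digits) (simp_all add: digits mixed_radix_less)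
  also have "\<dots> = A $$ (a, a') * B $$ (b, b') * C $$ (c, c')"
    by (subst index_kron_digits) (simp_all add: digits)
  also have "\<dots> = A $$ (a, a') * kron B C $$ (b * dim_row C + c, b' * dim_col C + c')"
    by (subst index_kron_digits) (simp_all add: digits)
  also have "\<dots> = kron A (kron B C) $$ (i, j)"
  proof -
    have "i = a * (dim_row B * dim_row C) + (b * dim_row C + c)"
      and "j = a' * (dim_col B * dim_col C) + (b' * dim_col C + c')"
      unfolding i j by (simp_all add: algebra_simps)
    then show ?thesis
      by (simp only:) (rule index_kron_digits[symmetric]; simp add: digits mixed_radix_less)
  qed
  finally show "kron (kron A B) C $$ (i, j) = kron A (kron B C) $$ (i, j)" .
qed simp_all

lemma kron_one_left: "kron (1\<^sub>m 1) A = A"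
  by (rule eq_matI) simp_all

lemma kron_one_right: "kron A (1\<^sub>m 1) = A"
  by (rule eq_matI) simp_all

lemma kron_one_one: "kron (1\<^sub>m N) (1\<^sub>m M) = 1\<^sub>m (N * M)"
proof (rule eq_matI)
  fix i j
  assume "i < dim_row (1\<^sub>m (N * M) :: complex mat)" "j < dim_col (1\<^sub>m (N * M) :: complex mat)"
  then obtain a b a' b' where "a < N" "b < M" "i = a * M + b" "a' < N" "b' < M" "j = a' * M + b'"
    by (metis index_one_mat(2,3) less_mult_cases)
  then show "kron (1\<^sub>m N) (1\<^sub>m M) $$ (i, j) = (1\<^sub>m (N * M) :: complex mat) $$ (i, j)"
    by (simp add: mixed_radix_less mixed_radix_eq_iff)
qed simp_all

lemma kron_mult:
  assumes "A \<in> carrier_mat k n" "B \<in> carrier_mat m k" "C \<in> carrier_mat k' n'" "D \<in> carrier_mat m' k'"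
  shows "kron (B * A) (D * C) = kron B D * kron A C"
proof (rule eq_matI)
  fix i j
  assume "i < dim_row (kron B D * kron A C)" "j < dim_col (kron B D * kron A C)"
  then obtain a b a' b' where digits: "a < m" "b < m'" "a' < n" "b' < n'"
    and i: "i = a * m' + b" and j: "j = a' * n' + b'"
    using assms by (metis carrier_matD dim_kron index_mult_mat(2,3) less_mult_cases)
  have "kron (B * A) (D * C) $$ (i, j) = (B * A) $$ (a, a') * (D * C) $$ (b, b')"
    unfolding i j using assms digits by (intro index_kron_digits) auto
  also have "\<dots> = (\<Sum>x<k. B $$ (a, x) * A $$ (x, a')) * (\<Sum>y<k'. D $$ (b, y) * C $$ (y, b'))"
    using assms digits by (simp del: index_mult_mat add: index_mult_mat_sum)
  also have "\<dots> = (\<Sum>x<k. \<Sum>y<k'. kron B D $$ (i, x * k' + y) * kron A C $$ (x * k' + y, j))"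
    unfolding sum_product
  proof (intro sum.cong refl)
    fix x y
    assume "x \<in> {..<k}" "y \<in> {..<k'}"
    then have "kron B D $$ (i, x * k' + y) = B $$ (a, x) * D $$ (b, y)"
      and "kron A C $$ (x * k' + y, j) = A $$ (x, a') * C $$ (y, b')"
      unfolding i j using assms digits by (auto intro: index_kron_digits)
    then show "B $$ (a, x) * A $$ (x, a') * (D $$ (b, y) * C $$ (y, b'))
        = kron B D $$ (i, x * k' + y) * kron A C $$ (x * k' + y, j)"
      by (simp add: ac_simps)
  qed
  also have "\<dots> = (\<Sum>z<k * k'. kron B D $$ (i, z) * kron A C $$ (z, j))"
    by (rule sum_lessThan_mult[symmetric])
  also have "\<dots> = (kron B D * kron A C) $$ (i, j)"
    using assms digits unfolding i j by (subst index_mult_mat_sum) (auto simp: mixed_radix_less)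
  finally show "kron (B * A) (D * C) $$ (i, j) = (kron B D * kron A C) $$ (i, j)" .
qed (use assms in simp_all)

definition perm_mat :: "nat \<Rightarrow> (nat \<Rightarrow> nat) \<Rightarrow> complex mat" where
  "perm_mat N f = mat N N (\<lambda>(i, j). if i = f j then 1 else 0)"

lemma perm_mat_carrier [simp]:
  "perm_mat N f \<in> carrier_mat N N" "dim_row (perm_mat N f) = N" "dim_col (perm_mat N f) = N"
  by (simp_all add: perm_mat_def)

lemma perm_mat_id: "perm_mat N (\<lambda>j. j) = 1\<^sub>m N"
  by (auto simp: perm_mat_def)

lemma perm_mat_cong: "(\<And>j. j < N \<Longrightarrow> f j = g j) \<Longrightarrow> perm_mat N f = perm_mat N g"
  by (auto simp: perm_mat_def)

lemma mult_perm_mat: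
  assumes "dim_col A = N" "\<And>j. j < N \<Longrightarrow> f j < N"
  shows "A * perm_mat N f = mat (dim_row A) N (\<lambda>(i, j). A $$ (i, f j))"
proof (rule eq_matI)
  fix i j
  assume "i < dim_row (mat (dim_row A) N (\<lambda>(i, j). A $$ (i, f j)))"
    "j < dim_col (mat (dim_row A) N (\<lambda>(i, j). A $$ (i, f j)))"
  then have ij: "i < dim_row A" "j < N" by simp_all
  then have "(A * perm_mat N f) $$ (i, j) = (\<Sum>k<N. A $$ (i, k) * (if k = f j then 1 else 0))"
    using assms(1) by (simp del: index_mult_mat add: index_mult_mat_sum perm_mat_def)
  also have "\<dots> = A $$ (i, f j)"
    using assms(2)[OF ij(2)] by (simp add: if_distrib sum.delta' cong: if_cong)
  finally show "(A * perm_mat N f) $$ (i, j) = mat (dim_row A) N (\<lambda>(i, j). A $$ (i, f j)) $$ (i, j)"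
    using ij by simp
qed simp_all

lemma perm_mat_mult:
  assumes "A \<in> carrier_mat N M"
    and "\<And>j. j < N \<Longrightarrow> f j < N \<and> g (f j) = j" "\<And>i. i < N \<Longrightarrow> g i < N \<and> f (g i) = i"
  shows "perm_mat N f * A = mat N M (\<lambda>(i, j). A $$ (g i, j))"
proof (rule eq_matI)
  fix i j
  assume "i < dim_row (mat N M (\<lambda>(i, j). A $$ (g i, j)))" "j < dim_col (mat N M (\<lambda>(i, j). A $$ (g i, j)))"
  then have ij: "i < N" "j < M" by simp_all
  then have "(perm_mat N f * A) $$ (i, j) = (\<Sum>k<N. (if i = f k then 1 else 0) * A $$ (k, j))"
    using assms(1) by (simp del: index_mult_mat add: index_mult_mat_sum perm_mat_def)
  also have "\<dots> = (\<Sum>k<N. if k = g i then A $$ (k, j) else 0)"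
    using assms(2,3) ij(1) by (intro sum.cong refl) auto
  also have "\<dots> = A $$ (g i, j)"
    using assms(3)[OF ij(1)] by (simp add: sum.delta')
  finally show "(perm_mat N f * A) $$ (i, j) = mat N M (\<lambda>(i, j). A $$ (g i, j)) $$ (i, j)"
    using ij by simp
qed (use assms(1) in simp_all)

lemma perm_mat_comp:
  "(\<And>j. j < N \<Longrightarrow> g j < N) \<Longrightarrow> perm_mat N f * perm_mat N g = perm_mat N (\<lambda>j. f (g j))"
  by (subst mult_perm_mat) (auto simp: perm_mat_def)

lemma kron_perm_mat:
  assumes "\<And>j. j < N \<Longrightarrow> f j < N" "\<And>j. j < M \<Longrightarrow> g j < M"
  shows "kron (perm_mat N f) (perm_mat M g) = perm_mat (N * M) (\<lambda>j. f (j div M) * M + g (j mod M))"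
proof (rule eq_matI)
  fix i j
  assume "i < dim_row (perm_mat (N * M) (\<lambda>j. f (j div M) * M + g (j mod M)))"
    "j < dim_col (perm_mat (N * M) (\<lambda>j. f (j div M) * M + g (j mod M)))"
  then have "i < N * M" "j < N * M"
    by simp_all
  then obtain a b a' b' where digits: "a < N" "b < M" "a' < N" "b' < M"
    and i: "i = a * M + b" and j: "j = a' * M + b'"
    by (metis less_mult_cases)
  have "kron (perm_mat N f) (perm_mat M g) $$ (i, j) = perm_mat N f $$ (a, a') * perm_mat M g $$ (b, b')"
    unfolding i j using digits by (intro index_kron_digits) simp_all
  also have "\<dots> = (if a * M + b = f a' * M + g b' then 1 else 0)"
    using digits assms by (simp add: perm_mat_def mixed_radix_eq_iff)
  also have "\<dots> = perm_mat (N * M) (\<lambda>j. f (j div M) * M + g (j mod M)) $$ (i, j)"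
    unfolding i j using digits by (simp add: perm_mat_def mixed_radix_less)
  finally show "kron (perm_mat N f) (perm_mat M g) $$ (i, j)
      = perm_mat (N * M) (\<lambda>j. f (j div M) * M + g (j mod M)) $$ (i, j)" .
qed simp_all

text \<open>\<open>swap_index N M\<close> exchanges the digits of a mixed-radix index, \<open>a * M + b \<mapsto> b * N + a\<close>,
  so \<open>swap_blocks N M\<close> is the symmetry \<open>\<complex>\<^sup>N \<otimes> \<complex>\<^sup>M \<rightarrow> \<complex>\<^sup>M \<otimes> \<complex>\<^sup>N\<close>.\<close>

definition swap_index :: "nat \<Rightarrow> nat \<Rightarrow> nat \<Rightarrow> nat" where
  "swap_index N M j = (j mod M) * N + j div M"

definition swap_blocks :: "nat \<Rightarrow> nat \<Rightarrow> complex mat" where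
  "swap_blocks N M = perm_mat (N * M) (swap_index N M)"

lemma swap_index_digits [simp]: "b < M \<Longrightarrow> swap_index N M (a * M + b) = b * N + a"
  by (simp add: swap_index_def)

lemma swap_index_less: "j < N * M \<Longrightarrow> swap_index N M j < N * M"
  by (elim less_mult_cases) (simp add: mixed_radix_less mult.commute[of N M])

lemma swap_index_swap_index: "j < N * M \<Longrightarrow> swap_index M N (swap_index N M j) = j"
  by (elim less_mult_cases) simp

lemma swap_mat_eq_swap_blocks: "swap_mat d = swap_blocks d d"
  by (simp add: swap_mat_def swap_blocks_def perm_mat_def swap_index_def)

lemma swap_blocks_one_left: "swap_blocks 1 M = 1\<^sub>m M"
  by (auto simp: swap_blocks_def swap_index_def perm_mat_id[symmetric] intro: perm_mat_cong)

lemma swap_blocks_one_right: "swap_blocks N 1 = 1\<^sub>m N"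
  by (auto simp: swap_blocks_def swap_index_def perm_mat_id[symmetric] intro: perm_mat_cong)

lemma swap_blocks_inverse: "swap_blocks M N * swap_blocks N M = 1\<^sub>m (N * M)"
proof -
  have "swap_blocks M N * swap_blocks N M = perm_mat (N * M) (\<lambda>j. swap_index M N (swap_index N M j))"
    unfolding swap_blocks_def mult.commute[of M N] by (intro perm_mat_comp swap_index_less)
  also have "\<dots> = 1\<^sub>m (N * M)"
    unfolding perm_mat_id[symmetric] by (intro perm_mat_cong swap_index_swap_index)
  finally show ?thesis .
qed

lemma swap_blocks_natural:
  assumes "A \<in> carrier_mat N' N" "B \<in> carrier_mat M' M"
  shows "swap_blocks N' M' * kron A B = kron B A * swap_blocks N M"
proof -
  have "swap_index N' M' j < M' * N' \<and> swap_index M' N' (swap_index N' M' j) = j" if "j < M' * N'" for j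
    using that swap_index_less[of j N' M'] swap_index_swap_index[of j N' M'] by (simp add: mult.commute)
  moreover have "swap_index M' N' i < M' * N' \<and> swap_index N' M' (swap_index M' N' i) = i" if "i < M' * N'" for i
    using that by (simp add: swap_index_less swap_index_swap_index)
  ultimately have "swap_blocks N' M' * kron A B
      = mat (M' * N') (N * M) (\<lambda>(i, j). kron A B $$ (swap_index M' N' i, j))"
    unfolding swap_blocks_def mult.commute[of N' M'] using assms by (intro perm_mat_mult) auto
  also have "\<dots> = mat (M' * N') (N * M) (\<lambda>(i, j). kron B A $$ (i, swap_index N M j))"
  proof (rule eq_matI)
    fix i j
    assume "i < dim_row (mat (M' * N') (N * M) (\<lambda>(i, j). kron B A $$ (i, swap_index N M j)))"
      "j < dim_col (mat (M' * N') (N * M) (\<lambda>(i, j). kron B A $$ (i, swap_index N M j)))"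
    then have "i < M' * N'" "j < N * M"
      by simp_all
    then obtain a b a' b' where digits: "a < M'" "b < N'" "a' < N" "b' < M"
      and i: "i = a * N' + b" and j: "j = a' * M + b'"
      by (metis less_mult_cases)
    then show "mat (M' * N') (N * M) (\<lambda>(i, j). kron A B $$ (swap_index M' N' i, j)) $$ (i, j)
        = mat (M' * N') (N * M) (\<lambda>(i, j). kron B A $$ (i, swap_index N M j)) $$ (i, j)"
      using assms by (simp del: index_kron add: index_kron_digits mixed_radix_less)
  qed simp_all
  also have "\<dots> = kron B A * swap_blocks N M"
    unfolding swap_blocks_def using assms
    by (subst mult_perm_mat) (auto simp: swap_index_less)
  finally show ?thesis .
qed

lemma swap_blocks_hexagon_right:
  "swap_blocks N (M * K) = kron (1\<^sub>m M) (swap_blocks N K) * kron (swap_blocks N M) (1\<^sub>m K)"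
proof -
  have outer: "kron (1\<^sub>m M) (swap_blocks N K)
      = perm_mat (N * (M * K)) (\<lambda>x. x div (N * K) * (N * K) + swap_index N K (x mod (N * K)))"
    unfolding swap_blocks_def perm_mat_id[symmetric] mult.left_commute[of N M K]
    by (rule kron_perm_mat) (simp_all add: swap_index_less)
  have inner: "kron (swap_blocks N M) (1\<^sub>m K)
      = perm_mat (N * (M * K)) (\<lambda>j. swap_index N M (j div K) * K + j mod K)"
    unfolding swap_blocks_def perm_mat_id[symmetric] mult.assoc[symmetric]
    by (rule kron_perm_mat) (simp_all add: swap_index_less)
  have index_eq: "x div (N * K) * (N * K) + swap_index N K (x mod (N * K)) = swap_index N (M * K) j"
    if "j < N * (M * K)" and x: "x = swap_index N M (j div K) * K + j mod K" for j x
  proof -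
    obtain a b c where digits: "a < N" "b < M" "c < K" and j: "j = (a * M + b) * K + c"
      using \<open>j < N * (M * K)\<close> unfolding mult.assoc[symmetric] by (metis less_mult_cases)
    have "x = b * (N * K) + (a * K + c)"
      unfolding x j using digits by simp (simp add: algebra_simps)
    then have "x div (N * K) * (N * K) + swap_index N K (x mod (N * K)) = b * (N * K) + (c * N + a)"
      using digits by (simp add: mixed_radix_less)
    also have "\<dots> = (b * K + c) * N + a"
      by (simp add: algebra_simps)
    also have "\<dots> = swap_index N (M * K) (a * (M * K) + (b * K + c))"
      using digits by (intro swap_index_digits[symmetric] mixed_radix_less)
    also have "a * (M * K) + (b * K + c) = j"
      unfolding j by (simp add: algebra_simps)
    finally show ?thesis .
  qed
  have "kron (1\<^sub>m M) (swap_blocks N K) * kron (swap_blocks N M) (1\<^sub>m K)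
      = perm_mat (N * (M * K)) (\<lambda>j. (swap_index N M (j div K) * K + j mod K) div (N * K) * (N * K)
          + swap_index N K ((swap_index N M (j div K) * K + j mod K) mod (N * K)))"
    unfolding outer inner mult.assoc[symmetric]
    by (intro perm_mat_comp mixed_radix_map_less[where g = "\<lambda>b. b"]) (simp_all add: swap_index_less)
  also have "\<dots> = swap_blocks N (M * K)"
    unfolding swap_blocks_def by (rule perm_mat_cong) (rule index_eq[OF _ refl])
  finally show ?thesis ..
qed

lemma swap_blocks_hexagon_left:
  "swap_blocks (N * M) K = kron (swap_blocks N K) (1\<^sub>m M) * kron (1\<^sub>m N) (swap_blocks M K)"
proof -
  have outer: "kron (swap_blocks N K) (1\<^sub>m M)
      = perm_mat (N * (M * K)) (\<lambda>x. swap_index N K (x div M) * M + x mod M)"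
  proof -
    have "N * (M * K) = N * K * M"
      by (simp add: ac_simps)
    then show ?thesis
      unfolding swap_blocks_def perm_mat_id[symmetric]
      by (simp only:) (rule kron_perm_mat; simp add: swap_index_less)
  qed
  have inner: "kron (1\<^sub>m N) (swap_blocks M K)
      = perm_mat (N * (M * K)) (\<lambda>j. j div (M * K) * (M * K) + swap_index M K (j mod (M * K)))"
    unfolding swap_blocks_def perm_mat_id[symmetric]
    by (rule kron_perm_mat) (simp_all add: swap_index_less)
  have index_eq: "swap_index N K (x div M) * M + x mod M = swap_index (N * M) K j"
    if "j < N * (M * K)" and x: "x = j div (M * K) * (M * K) + swap_index M K (j mod (M * K))" for j x
  proof -
    obtain a b c where digits: "a < N" "b < M" "c < K" and j: "j = a * (M * K) + (b * K + c)"
      using \<open>j < N * (M * K)\<close> by (metis less_mult_cases mixed_radix_less)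
    have "x = (a * K + c) * M + b"
      unfolding x j using digits by (simp add: mixed_radix_less) (simp add: algebra_simps)
    then have "swap_index N K (x div M) * M + x mod M = (c * N + a) * M + b"
      using digits by simp
    also have "\<dots> = c * (N * M) + (a * M + b)"
      by (simp add: algebra_simps)
    also have "\<dots> = swap_index (N * M) K ((a * M + b) * K + c)"
      using digits by (intro swap_index_digits[symmetric])
    also have "(a * M + b) * K + c = j"
      unfolding j by (simp add: algebra_simps)
    finally show ?thesis .
  qed
  have "kron (swap_blocks N K) (1\<^sub>m M) * kron (1\<^sub>m N) (swap_blocks M K)
      = perm_mat (N * (M * K)) (\<lambda>j.
          swap_index N K ((j div (M * K) * (M * K) + swap_index M K (j mod (M * K))) div M) * M
          + (j div (M * K) * (M * K) + swap_index M K (j mod (M * K))) mod M)"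
    unfolding outer inner
    by (intro perm_mat_comp mixed_radix_map_less[where f = "\<lambda>a. a"]) (simp_all add: swap_index_less)
  also have "\<dots> = swap_blocks (N * M) K"
    unfolding swap_blocks_def mult.assoc by (rule perm_mat_cong) (rule index_eq[OF _ refl])
  finally show ?thesis ..
qed

lemma typed_swp1: "typed ar (swp1 m) (Suc m) (Suc m)"
proof (induction m)
  case 0
  show ?case by (simp add: t_id)
next
  case (Suc m)
  have "typed ar (Tns Sw (Idd m)) (2 + m) (2 + m)"
    by (intro t_tns t_sw t_id)
  moreover have "typed ar (Tns (Idd 1) (swp1 m)) (1 + Suc m) (1 + Suc m)"
    by (intro t_tns t_id Suc)
  ultimately show ?case
    by (auto intro: t_cmp)
qed

lemma typed_swp: "typed ar (swp n m) (n + m) (m + n)"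
proof (induction n)
  case 0
  show ?case by (simp add: t_id)
next
  case (Suc n)
  have "typed ar (Tns (Idd 1) (swp n m)) (1 + (n + m)) (1 + (m + n))"
    by (intro t_tns t_id Suc)
  moreover have "typed ar (Tns (swp1 m) (Idd n)) (Suc m + n) (Suc m + n)"
    by (intro t_tns t_id typed_swp1)
  ultimately show ?case
    by (auto intro: t_cmp)
qed

lemma eqv_imp_typed: "eqv ar R a b n m \<Longrightarrow> typed ar a n m \<and> typed ar b n m"
proof (induction rule: eqv.induct)
  case (e_tns_assoc a n m b n' m' c n'' m'')
  then show ?case
    by (metis add.assoc t_tns)
next
  case (e_unit_left a n m)
  then show ?case
    using t_tns[OF t_id[of ar 0] e_unit_left] by simp
next
  case (e_unit_right a n m)
  then show ?case
    using t_tns[OF e_unit_right t_id[of ar 0]] by simp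
next
  case (e_swp_inv n m)
  then show ?case
    using typed_swp[of ar n m] typed_swp[of ar m n] by (metis add.commute t_cmp t_id)
next
  case (e_swp_nat a n n' b m m')
  then show ?case
    using typed_swp t_cmp t_tns by metis
qed (auto intro: typed.intros)

lemma typed_map_diag: "typed ar (map_diag f C) n m \<longleftrightarrow> typed (ar \<circ> f) C n m"
proof (induction C arbitrary: n m)
  case (Gen g)
  show ?case
    by (auto elim: typed.cases intro: typed.intros)
next
  case (Cmp a b)
  show ?case
    using Cmp.IH by (auto elim!: typed.cases[of _ "Cmp _ _"] intro: typed.intros)
next
  case (Tns a b)
  show ?case
    using Tns.IH by (auto elim!: typed.cases[of _ "Tns _ _"] intro: typed.intros)
qed (auto elim: typed.cases intro: typed.intros)

lemma sem_map_diag: "sem d G (map_diag f C) = sem d (G \<circ> f) C"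
  by (induction C) simp_all

lemma sem_carrier_mat:
  assumes "\<And>g. G g \<in> carrier_mat (d ^ snd (ar g)) (d ^ fst (ar g))"
  shows "typed ar C n m \<Longrightarrow> sem d G C \<in> carrier_mat (d ^ m) (d ^ n)"
proof (induction rule: typed.induct)
  case (t_gen g n m)
  then show ?case using assms[of g] by simp
next
  case t_sw
  then show ?case by (simp add: swap_mat_def power2_eq_square)
qed (auto simp: power_add)

lemma sem_swp1: "sem d G (swp1 m) = swap_blocks d (d ^ m)"
proof (induction m)
  case 0
  show ?case using swap_blocks_one_right[of d] by simp
next
  case (Suc m)
  then show ?case
    by (simp add: swap_mat_eq_swap_blocks swap_blocks_hexagon_right[symmetric])
qed

lemma sem_swp: "sem d G (swp n m) = swap_blocks (d ^ n) (d ^ m)"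
proof (induction n)
  case 0
  show ?case using swap_blocks_one_left[of "d ^ m"] by simp
next
  case (Suc n)
  then show ?case
    by (simp add: sem_swp1 swap_blocks_hexagon_left[symmetric])
qed

lemma eqv_imp_sem_eq:
  assumes gen_dim: "\<And>g. G g \<in> carrier_mat (d ^ snd (ar g)) (d ^ fst (ar g))"
    and sound: "\<And>a b n m. (a, b) \<in> R \<Longrightarrow> typed ar a n m \<Longrightarrow> typed ar b n m \<Longrightarrow>
      sem d G a = sem d G b"
  shows "eqv ar R a b n m \<Longrightarrow> sem d G a = sem d G b"
proof (induction rule: eqv.induct)
  case (e_rel a b n m)
  then show ?case using sound by blast
next
  case (e_cmp_assoc a n k b l c m)
  show ?case
    using assoc_mult_mat[OF sem_carrier_mat[OF gen_dim e_cmp_assoc(3)]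
        sem_carrier_mat[OF gen_dim e_cmp_assoc(2)] sem_carrier_mat[OF gen_dim e_cmp_assoc(1)]]
    by simp
next
  case (e_id_left a n m)
  show ?case using sem_carrier_mat[OF gen_dim e_id_left] by simp
next
  case (e_id_right a n m)
  show ?case using sem_carrier_mat[OF gen_dim e_id_right] by simp
next
  case (e_tns_assoc a n m b n' m' c n'' m'')
  show ?case by (simp add: kron_assoc)
next
  case (e_unit_left a n m)
  show ?case using kron_one_left[of "sem d G a"] by simp
next
  case (e_unit_right a n m)
  show ?case using kron_one_right[of "sem d G a"] by simp
next
  case (e_tns_id n m)
  show ?case by (simp add: kron_one_one power_add)
next
  case (e_interchange a n k b m c n' k' e m')
  show ?case
    using kron_mult[OF sem_carrier_mat[OF gen_dim e_interchange(1)]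
        sem_carrier_mat[OF gen_dim e_interchange(2)] sem_carrier_mat[OF gen_dim e_interchange(3)]
        sem_carrier_mat[OF gen_dim e_interchange(4)]]
    by simp
next
  case (e_swp_inv n m)
  show ?case
    using swap_blocks_inverse[of "d ^ m" "d ^ n"] by (simp add: sem_swp power_add)
next
  case (e_swp_nat a n n' b m m')
  show ?case
    using swap_blocks_natural[OF sem_carrier_mat[OF gen_dim e_swp_nat(1)]
        sem_carrier_mat[OF gen_dim e_swp_nat(2)]]
    by (simp add: sem_swp)
qed simp_all

lemma sem_spow:
  assumes "sem d G w = mat 1 1 (\<lambda>_. z)"
  shows "sem d G (spow w k) = mat 1 1 (\<lambda>_. z ^ k)"
proof (induction k)
  case 0
  show ?case by (auto intro!: eq_matI)
next
  case (Suc k)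
  then show ?case
    using assms by (auto intro!: eq_matI simp: scalar_prod_def)
qed

lemma eqv_reflect_map_diag:
  assumes faithful: "\<And>a b n k. typed ar a n k \<Longrightarrow> typed ar b n k \<Longrightarrow> sem d G a = sem d G b \<Longrightarrow>
      eqv ar R a b n k"
    and gen_dim': "\<And>x. G' x \<in> carrier_mat (d ^ snd (ar' x)) (d ^ fst (ar' x))"
    and sound': "\<And>a b n k. (a, b) \<in> R' \<Longrightarrow> typed ar' a n k \<Longrightarrow> typed ar' b n k \<Longrightarrow>
      sem d G' a = sem d G' b"
    and restrict: "ar' \<circ> f = ar" "G' \<circ> f = G"
    and derivable: "eqv ar' R' (map_diag f C1) (map_diag f C2) n k"
  shows "eqv ar R C1 C2 n k"
proof (rule faithful)
  show "typed ar C1 n k" "typed ar C2 n k"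
    using eqv_imp_typed[OF derivable] by (simp_all add: typed_map_diag restrict)
  show "sem d G C1 = sem d G C2"
    using eqv_imp_sem_eq[OF gen_dim' sound' derivable] by (simp add: sem_map_diag restrict)
qed

lemma R_sharp_sound:
  assumes sound: "\<And>a b n k. (a, b) \<in> R \<Longrightarrow> typed ar a n k \<Longrightarrow> typed ar b n k \<Longrightarrow>
      sem d G a = sem d G b"
    and gen_dim: "\<And>g. G g \<in> carrier_mat (d ^ snd (ar g)) (d ^ fst (ar g))"
    and s_scalar: "typed ar s 0 0"
    and zeta_order: "\<zeta> ^ (m * l) = 1"
    and zeta_r: "\<zeta> ^ r = sem d G s $$ (0, 0)"
    and rel: "(a, b) \<in> R_sharp R s m l r"
    and typed: "typed (ar_sharp ar) a n k" "typed (ar_sharp ar) b n k"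
  shows "sem d (case_option (mat 1 1 (\<lambda>_. \<zeta>)) G) a = sem d (case_option (mat 1 1 (\<lambda>_. \<zeta>)) G) b"
proof -
  let ?G' = "case_option (mat 1 1 (\<lambda>_. \<zeta>)) G"
  have restrict: "ar_sharp ar \<circ> Some = ar" "?G' \<circ> Some = G"
    by (auto simp: ar_sharp_def)
  have omega_pow: "sem d ?G' (spow (Gen None) j) = mat 1 1 (\<lambda>_. \<zeta> ^ j)" for j
    by (rule sem_spow) simp
  from rel consider (src) a0 b0 where "(a0, b0) \<in> R" "a = map_diag Some a0" "b = map_diag Some b0"
    | (order) "a = spow (Gen None) (m * l)" "b = Idd 0"
    | (root) "a = spow (Gen None) r" "b = map_diag Some s"
    unfolding R_sharp_def by auto
  then show ?thesis
  proof cases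
    case src
    have "typed ar a0 n k" "typed ar b0 n k"
      using typed unfolding src typed_map_diag restrict by simp_all
    then show ?thesis
      unfolding src sem_map_diag restrict using sound src(1) by blast
  next
    case order
    show ?thesis
      unfolding order omega_pow using zeta_order by (auto intro!: eq_matI)
  next
    case root
    have "sem d G s \<in> carrier_mat 1 1"
      using sem_carrier_mat[OF gen_dim s_scalar] by simp
    then show ?thesis
      unfolding root omega_pow sem_map_diag restrict using zeta_r by (auto intro!: eq_matI)
  qed
qed

theorem mainTheorem3:
  fixes ar :: "'g \<Rightarrow> nat \<times> nat"
    and R :: "('g diag \<times> 'g diag) set"
    and d :: nat
    and G :: "'g \<Rightarrow> complex mat"
    and s :: "'g diag"
    and m l r :: nat
    and \<zeta> :: complex
    and C1 C2 :: "'g diag"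
    and n k :: nat
  assumes gen_dim: "\<And>g. G g \<in> carrier_mat (d ^ snd (ar g)) (d ^ fst (ar g))"
    and sound: "\<And>a b n' k'. (a, b) \<in> R \<Longrightarrow> typed ar a n' k' \<Longrightarrow> typed ar b n' k' \<Longrightarrow>
                   sem d G a = sem d G b"
    and faithful: "\<And>a b n' k'. typed ar a n' k' \<Longrightarrow> typed ar b n' k' \<Longrightarrow>
                   sem d G a = sem d G b \<Longrightarrow> eqv ar R a b n' k'"
    and endo_only: "\<And>n' k'. homs d ar G n' k' \<noteq> {} \<Longrightarrow> n' = k'"
    and s_scalar: "typed ar s 0 0"
    and scalars_cyclic: "homs d ar G 0 0 = range (\<lambda>j. sem d G s ^\<^sub>m j)"
    and scalars_order: "finite (homs d ar G 0 0)" "card (homs d ar G 0 0) = m"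
    and no_hidden_phases: "\<And>c n'. cmod c = 1 \<Longrightarrow> c \<cdot>\<^sub>m 1\<^sub>m (d ^ n') \<in> homs d ar G n' n' \<Longrightarrow>
                   c \<cdot>\<^sub>m 1\<^sub>m 1 \<in> homs d ar G 0 0"
    and invertible: "\<And>f n' k'. f \<in> homs d ar G n' k' \<Longrightarrow>
                   \<exists>f' \<in> homs d ar G k' n'. f' * f = 1\<^sub>m (d ^ n') \<and> f * f' = 1\<^sub>m (d ^ k')"
    and l_pos: "l \<ge> 1"
    and zeta_order: "\<zeta> ^ (m * l) = 1" "\<And>j. 0 < j \<Longrightarrow> j < m * l \<Longrightarrow> \<zeta> ^ j \<noteq> 1"
    and zeta_r: "\<zeta> ^ r = sem d G s $$ (0, 0)"
    and derivable_sharp: "eqv (ar_sharp ar) (R_sharp R s m l r)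
                            (map_diag Some C1) (map_diag Some C2) n k"
  shows "eqv ar R C1 C2 n k"
proof -
  let ?G' = "case_option (mat 1 1 (\<lambda>_. \<zeta>)) G"
  have gen_dim': "\<And>x. ?G' x \<in> carrier_mat (d ^ snd (ar_sharp ar x)) (d ^ fst (ar_sharp ar x))"
    using gen_dim by (simp add: ar_sharp_def split: option.split)
  have restrict: "ar_sharp ar \<circ> Some = ar" "?G' \<circ> Some = G"
    by (auto simp: ar_sharp_def)
  show ?thesis
    using eqv_reflect_map_diag[OF faithful gen_dim'
        R_sharp_sound[OF sound gen_dim s_scalar zeta_order(1) zeta_r] restrict derivable_sharp] .
qed

end
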